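(* Let $n \ge k \ge 1$ be integers, let $G$ be a simple undirected graph on $n$ vertices, and let $P_1,\ldots,P_k$ be vertex-disjoint directed paths in $G$ covering $V(G)$ such that the digraph $D(G,P_1,\ldots,P_k)$ is acyclic. Then $\lvert E(G)\rvert \le kn - \binom{k+1}{2}$. Equivalently, $\Gamma(n,k) \le kn - \binom{k+1}{2}$.
   Context: $y \sim z$ means $y$ and $z$ are adjacent in $G$. A directed path in $G$ is a sequence $v_1 \to \cdots \to v_m$ ($m \ge 1$) of distinct vertices with $v_tv_{t+1} \in E(G)$; its arcs are $v_t \to v_{t+1}$. Vertex-disjoint and covering means every vertex lies in exactly one $P_j$. The digraph $D = D(G,P_1,\ldots,P_k)$ has vertex set $V(G)$, and for distinct $x,y$ there is an arc $x \to y$ iff either some $P_j$ contains the arc $x \to y$, or there is a vertex $z$ and a path $P_j$ with $x \to z$ an arc of $P_j$ and $y \sim z$. $\Gamma(n,k)$ is the maximum of $\lvert E(G)\rvert$ over all such $G$ on $n$ vertices with $k$ such paths for which $D$ is acyclic. *)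

theory Defs
  imports Main
begin

definition simple_graph :: "'a set \<Rightarrow> ('a \<Rightarrow> 'a \<Rightarrow> bool) \<Rightarrow> bool" where
  "simple_graph V E \<longleftrightarrow> finite V \<and> (\<forall>x y. E x y \<longrightarrow> E y x) \<and> (\<forall>x. \<not> E x x)
     \<and> (\<forall>x y. E x y \<longrightarrow> x \<in> V \<and> y \<in> V)"

definition edges :: "('a \<Rightarrow> 'a \<Rightarrow> bool) \<Rightarrow> 'a set set" where
  "edges E = {{x, y} | x y. E x y}"

definition path_arcs :: "'a list \<Rightarrow> ('a \<times> 'a) set" where
  "path_arcs p = set (zip p (tl p))"

definition is_dpath :: "'a set \<Rightarrow> ('a \<Rightarrow> 'a \<Rightarrow> bool) \<Rightarrow> 'a list \<Rightarrow> bool" where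
  "is_dpath V E p \<longleftrightarrow> p \<noteq> [] \<and> distinct p \<and> set p \<subseteq> V \<and> (\<forall>(x, y) \<in> path_arcs p. E x y)"

definition path_cover :: "'a set \<Rightarrow> ('a \<Rightarrow> 'a \<Rightarrow> bool) \<Rightarrow> 'a list list \<Rightarrow> bool" where
  "path_cover V E Ps \<longleftrightarrow> (\<forall>p \<in> set Ps. is_dpath V E p)
     \<and> (\<forall>i < length Ps. \<forall>j < length Ps. i \<noteq> j \<longrightarrow> set (Ps ! i) \<inter> set (Ps ! j) = {})
     \<and> (\<Union>p \<in> set Ps. set p) = V"

definition D_arcs :: "('a \<Rightarrow> 'a \<Rightarrow> bool) \<Rightarrow> 'a list list \<Rightarrow> ('a \<times> 'a) set" where
  "D_arcs E Ps = {(x, y). x \<noteq> y \<and>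
      ((\<exists>p \<in> set Ps. (x, y) \<in> path_arcs p) \<or>
       (\<exists>z. \<exists>p \<in> set Ps. (x, z) \<in> path_arcs p \<and> E y z))}"

end

theory Submission
  imports Defs
begin

(* Number the vertices 0, ..., n - 1 along a topological order f of the acyclic digraph D.
   The later neighbours of a vertex y meet every path P in at most one vertex: if y ~ a and y ~ b
   with f y < f a, f y < f b and a before b on P, then the predecessor x of b on P has the arc
   x -> y in D (or x = y), so f y < f a <= f x <= f y. Hence y has at most min k (n - 1 - f y)
   later neighbours, and summing over y gives sum_{i<n} min k i = kn - C(k+1, 2). *)

lemma finite_acyclic_has_sink:
  assumes "finite S" and "S \<noteq> {}" and "acyclic R"
  shows "\<exists>m\<in>S. \<forall>y\<in>S. (m, y) \<notin> R"
proof -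
  have "acyclic (R \<inter> S \<times> S)"
    using assms(3) by (rule acyclic_subset) blast
  then have "wf ((R \<inter> S \<times> S)\<inverse>)"
    using assms(1) by (intro finite_acyclic_wf_converse) auto
  moreover obtain s where "s \<in> S"
    using assms(2) by blast
  ultimately obtain m where "m \<in> S" and "\<And>y. (y, m) \<in> (R \<inter> S \<times> S)\<inverse> \<Longrightarrow> y \<notin> S"
    using wf_eq_minimal[THEN iffD1, rule_format, of _ s S] by blast
  then show ?thesis
    by blast
qed

lemma acyclic_topological_numbering:
  assumes "finite S" and "acyclic R"
  shows "\<exists>f. bij_betw f S {0..<card S} \<and> (\<forall>x\<in>S. \<forall>y\<in>S. (x, y) \<in> R \<longrightarrow> f x < f y)"
  using assms(1)
proof (induction "card S" arbitrary: S)
  case 0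
  then show ?case by (auto simp: bij_betw_def)
next
  case (Suc c)
  then have "S \<noteq> {}"
    by auto
  then obtain m where m: "m \<in> S" and sink: "\<forall>y\<in>S. (m, y) \<notin> R"
    using finite_acyclic_has_sink[OF Suc.prems _ assms(2)] by blast
  have "c = card (S - {m})" and "finite (S - {m})"
    using Suc m by simp_all
  then obtain g where g: "bij_betw g (S - {m}) {0..<c}"
    and g_mono: "\<forall>x\<in>S - {m}. \<forall>y\<in>S - {m}. (x, y) \<in> R \<longrightarrow> g x < g y"
    using Suc.hyps(1) by metis
  define f where "f = g(m := c)"
  have "bij_betw f (S - {m}) {0..<c}"
    using g unfolding f_def by (subst bij_betw_cong[where g = g]) auto
  then have "bij_betw f ((S - {m}) \<union> {m}) ({0..<c} \<union> {f m})"
    by (rule notIn_Un_bij_betw[rotated 2]) (simp_all add: f_def)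
  moreover have "(S - {m}) \<union> {m} = S" and "{0..<c} \<union> {f m} = {0..<card S}"
    using m Suc.hyps(2) by (auto simp: f_def)
  ultimately have "bij_betw f S {0..<card S}"
    by simp
  moreover have "f x < f y" if "x \<in> S" "y \<in> S" "(x, y) \<in> R" for x y
  proof -
    have "x \<noteq> m"
      using sink that by blast
    then have "g x < c"
      using g that(1) by (auto simp: bij_betw_def)
    then show ?thesis
      using g_mono that \<open>x \<noteq> m\<close> by (cases "y = m") (auto simp: f_def)
  qed
  ultimately show ?case by blast
qed

lemma nth_in_path_arcs:
  assumes "Suc i < length p"
  shows "(p ! i, p ! Suc i) \<in> path_arcs p"
  using assms unfolding path_arcs_def in_set_zip by (intro exI[of _ i]) (auto simp: nth_tl)

lemma path_arcs_distinct_neq: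
  assumes "distinct p" and "(x, y) \<in> path_arcs p"
  shows "x \<noteq> y"
  using assms unfolding path_arcs_def in_set_zip by (auto simp: nth_tl nth_eq_iff_index_eq)

lemma sorted_wrt_if_path_arcs:
  assumes "transp R" and "\<forall>(x, y) \<in> path_arcs p. R x y"
  shows "sorted_wrt R p"
  using assms nth_in_path_arcs by (auto simp: sorted_wrt_iff_nth_Suc_transp)

lemma path_cover_is_dpath:
  assumes "path_cover V E Ps" and "p \<in> set Ps"
  shows "is_dpath V E p"
  using assms by (simp add: path_cover_def)

lemma path_cover_Union:
  assumes "path_cover V E Ps"
  shows "(\<Union>p\<in>set Ps. set p) = V"
  using assms by (simp add: path_cover_def)

lemma D_arcs_subset:
  assumes "simple_graph V E" and "path_cover V E Ps"
  shows "D_arcs E Ps \<subseteq> V \<times> V"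
proof -
  have E_in_V: "x \<in> V \<and> y \<in> V" if "E x y" for x y
    using assms(1) that unfolding simple_graph_def by blast
  have arc_in_V: "x \<in> V \<and> y \<in> V" if "p \<in> set Ps" and "(x, y) \<in> path_arcs p" for p x y
  proof -
    have "E x y"
      using path_cover_is_dpath[OF assms(2) that(1)] that(2) unfolding is_dpath_def by blast
    then show ?thesis
      by (rule E_in_V)
  qed
  show ?thesis
    unfolding D_arcs_def by (auto dest: E_in_V arc_in_V)
qed

definition later_neighbours :: "('a \<Rightarrow> 'a \<Rightarrow> bool) \<Rightarrow> ('a \<Rightarrow> 'b::order) \<Rightarrow> 'a \<Rightarrow> 'a set" where
  "later_neighbours E f y = {z. E y z \<and> f y < f z}"

lemma sorted_wrt_path_if_D_arcs_increasing:
  fixes f :: "'a \<Rightarrow> 'b::order"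
  assumes "p \<in> set Ps" and "distinct p" and D_mono: "\<forall>(x, y) \<in> D_arcs E Ps. f x < f y"
  shows "sorted_wrt (\<lambda>x y. f x < f y) p"
proof (rule sorted_wrt_if_path_arcs)
  show "transp (\<lambda>x y. f x < f y)"
    by (rule transpI) (rule less_trans)
  have "(x, y) \<in> D_arcs E Ps" if "(x, y) \<in> path_arcs p" for x y
  proof -
    have "x \<noteq> y"
      using path_arcs_distinct_neq[OF assms(2) that] .
    then show ?thesis
      using assms(1) that unfolding D_arcs_def by blast
  qed
  then show "\<forall>(x, y) \<in> path_arcs p. f x < f y"
    using D_mono by blast
qed

lemma card_later_neighbours_inter_path:
  assumes "p \<in> set Ps" and "distinct p" and D_mono: "\<forall>(x, y) \<in> D_arcs E Ps. f x < f y"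
  shows "card (later_neighbours E f y \<inter> set p) \<le> 1"
proof -
  let ?L = "later_neighbours E f y"
  have sorted: "sorted_wrt (\<lambda>x y. f x < f y) p"
    using sorted_wrt_path_if_D_arcs_increasing[OF assms] .
  have not_both: "\<not> (p ! i \<in> ?L \<and> p ! j \<in> ?L)" if ij: "i < j" "j < length p" for i j
  proof
    assume "p ! i \<in> ?L \<and> p ! j \<in> ?L"
    then have y_before: "f y < f (p ! i)" and "E y (p ! j)"
      by (auto simp: later_neighbours_def)
    define x where "x = p ! (j - 1)"
    have arc: "(x, p ! j) \<in> path_arcs p"
      using nth_in_path_arcs[of "j - 1" p] ij by (simp add: x_def)
    have "f (p ! i) \<le> f x"
    proof (cases "i = j - 1")
      case False
      then have "f (p ! i) < f x"
        using sorted_wrt_nth_less[OF sorted, of i "j - 1"] ij by (simp add: x_def)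
      then show ?thesis
        by (rule less_imp_le)
    qed (simp add: x_def)
    moreover have "f x \<le> f y"
    proof (cases "x = y")
      case False
      then have "(x, y) \<in> D_arcs E Ps"
        using arc \<open>E y (p ! j)\<close> assms(1) unfolding D_arcs_def by blast
      then show ?thesis
        using D_mono by auto
    qed simp
    ultimately have "f (p ! i) \<le> f y"
      by (rule order_trans)
    with y_before show False
      by (simp add: less_le_not_le)
  qed
  have "a = b" if a: "a \<in> ?L \<inter> set p" and b: "b \<in> ?L \<inter> set p" for a b
  proof -
    obtain i where i: "i < length p" "a = p ! i"
      using IntD2[OF a] by (auto simp: in_set_conv_nth)
    obtain j where j: "j < length p" "b = p ! j"
      using IntD2[OF b] by (auto simp: in_set_conv_nth)
    have "\<not> i < j" and "\<not> j < i"
      using not_both a b i j by blast+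
    then show ?thesis
      using i j by simp
  qed
  then show ?thesis
    using card_le_Suc0_iff_eq[of "?L \<inter> set p"] by auto
qed

lemma card_later_neighbours_le_length:
  assumes "path_cover V E Ps" and "later_neighbours E f y \<subseteq> V"
    and D_mono: "\<forall>(x, y) \<in> D_arcs E Ps. f x < f y"
  shows "card (later_neighbours E f y) \<le> length Ps"
proof -
  let ?L = "later_neighbours E f y"
  have cover: "V = (\<Union>p\<in>set Ps. set p)"
    using path_cover_Union[OF assms(1)] by simp
  have distinct: "distinct p" if "p \<in> set Ps" for p
    using path_cover_is_dpath[OF assms(1) that] by (simp add: is_dpath_def)
  have "card ?L \<le> card (\<Union>p\<in>set Ps. ?L \<inter> set p)"
    using assms(2) cover by (intro card_mono) auto
  also have "\<dots> \<le> (\<Sum>p\<in>set Ps. card (?L \<inter> set p))"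
    by (rule card_UN_le) simp
  also have "\<dots> \<le> (\<Sum>p\<in>set Ps. 1)"
    using card_later_neighbours_inter_path[OF _ _ D_mono] distinct by (intro sum_mono) blast
  also have "\<dots> \<le> length Ps"
    by (simp add: card_length)
  finally show ?thesis .
qed

lemma card_edges_le_sum_later_neighbours:
  fixes f :: "'a \<Rightarrow> 'b::linorder"
  assumes "simple_graph V E" and "inj_on f V"
  shows "card (edges E) \<le> (\<Sum>y\<in>V. card (later_neighbours E f y))"
proof -
  have finV: "finite V" and sym: "\<And>x y. E x y \<Longrightarrow> E y x"
    and irrefl: "\<And>x. \<not> E x x" and inV: "\<And>x y. E x y \<Longrightarrow> x \<in> V \<and> y \<in> V"
    using assms(1) unfolding simple_graph_def by blast+
  let ?L = "later_neighbours E f"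
  have finL: "finite (?L y)" for y
    using finV inV by (auto simp: later_neighbours_def intro: finite_subset)
  have "edges E \<subseteq> (\<Union>y\<in>V. (\<lambda>z. {y, z}) ` ?L y)"
  proof
    fix e assume "e \<in> edges E"
    then obtain x y where e: "e = {x, y}" and "E x y"
      unfolding edges_def by blast
    then have "x \<in> V" "y \<in> V" "x \<noteq> y"
      using irrefl inV by auto
    then have "f x \<noteq> f y"
      using assms(2) by (simp add: inj_on_eq_iff)
    then consider "f x < f y" | "f y < f x"
      by (meson linorder_neqE)
    then show "e \<in> (\<Union>y\<in>V. (\<lambda>z. {y, z}) ` ?L y)"
      using e \<open>E x y\<close> sym \<open>x \<in> V\<close> \<open>y \<in> V\<close>
      by cases (auto simp: later_neighbours_def insert_commute)
  qed
  then have "card (edges E) \<le> card (\<Union>y\<in>V. (\<lambda>z. {y, z}) ` ?L y)"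
    using finV finL by (intro card_mono) auto
  also have "\<dots> \<le> (\<Sum>y\<in>V. card ((\<lambda>z. {y, z}) ` ?L y))"
    by (rule card_UN_le[OF finV])
  also have "\<dots> \<le> (\<Sum>y\<in>V. card (?L y))"
    by (intro sum_mono card_image_le finL)
  finally show ?thesis .
qed

lemma card_greater_in_numbering:
  assumes "bij_betw f V {0..<n}" and "y \<in> V"
  shows "card {z \<in> V. f y < f z} = n - 1 - f y"
proof -
  have "inj_on f {z \<in> V. f y < f z}"
    using bij_betw_imp_inj_on[OF assms(1)] by (rule inj_on_subset) blast
  moreover have "f ` {z \<in> V. f y < f z} = {i \<in> f ` V. f y < i}"
    by blast
  moreover have "\<dots> = {f y<..<n}"
    using bij_betw_imp_surj_on[OF assms(1)] by auto
  ultimately have "card {z \<in> V. f y < f z} = card {f y<..<n}"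
    using card_image by metis
  then show ?thesis
    by simp
qed

lemma card_later_neighbours_le_min:
  assumes "simple_graph V E" and "path_cover V E Ps" and "bij_betw f V {0..<n}"
    and D_mono: "\<forall>(x, y) \<in> D_arcs E Ps. f x < f y" and "y \<in> V"
  shows "card (later_neighbours E f y) \<le> min (length Ps) (n - 1 - f y)"
proof -
  have L_sub: "later_neighbours E f y \<subseteq> {z \<in> V. f y < f z}"
    using assms(1) by (auto simp: later_neighbours_def simple_graph_def)
  moreover have "finite V"
    using assms(1) by (simp add: simple_graph_def)
  ultimately have "card (later_neighbours E f y) \<le> card {z \<in> V. f y < f z}"
    by (intro card_mono) auto
  then have "card (later_neighbours E f y) \<le> n - 1 - f y"
    using card_greater_in_numbering[OF assms(3,5)] by simp
  moreover have "card (later_neighbours E f y) \<le> length Ps"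
    using card_later_neighbours_le_length[OF assms(2) _ D_mono] L_sub by blast
  ultimately show ?thesis
    by simp
qed

(* The correction term on the right makes the identity valid for all n, so that it can be proved
   by induction; it vanishes as soon as k <= n. *)
lemma sum_lessThan_min_add_choose:
  "(\<Sum>i<n. min k i) + (k + 1 choose 2) = k * n + (k - n + 1 choose 2)"
proof (induction n)
  case 0
  then show ?case by simp
next
  case (Suc n)
  show ?case
  proof (cases "n < k")
    case True
    then have "k - n = Suc (k - Suc n)"
      by simp
    moreover have "Suc (k - Suc n) + 1 choose 2 = (k - Suc n + 1 choose 2) + (k - Suc n + 1)"
      by (simp add: numeral_2_eq_2)
    ultimately show ?thesis
      using Suc.IH True by simp
  next
    case False
    then show ?thesis
      using Suc.IH by simp
  qed
qed

lemma sum_lessThan_min: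
  assumes "k \<le> (n::nat)"
  shows "(\<Sum>i<n. min k i) = k * n - (k + 1 choose 2)"
proof -
  have "k - n + 1 choose 2 = 0"
    using assms by simp
  then show ?thesis
    using sum_lessThan_min_add_choose[of k n] by linarith
qed

theorem lemma2:
  fixes V :: "'a set" and E :: "'a \<Rightarrow> 'a \<Rightarrow> bool" and Ps :: "'a list list" and n k :: nat
  assumes "1 \<le> k" and "k \<le> n"
    and "simple_graph V E" and "card V = n"
    and "length Ps = k" and "path_cover V E Ps"
    and "acyclic (D_arcs E Ps)"
  shows "card (edges E) \<le> k * n - (k + 1 choose 2)"
proof -
  have "finite V"
    using assms(3) by (simp add: simple_graph_def)
  then obtain f where bij: "bij_betw f V {0..<n}"
    and "\<forall>x\<in>V. \<forall>y\<in>V. (x, y) \<in> D_arcs E Ps \<longrightarrow> f x < f y"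
    using acyclic_topological_numbering[OF _ assms(7)] assms(4) by blast
  then have D_mono: "\<forall>(x, y) \<in> D_arcs E Ps. f x < f y"
    using D_arcs_subset[OF assms(3,6)] by blast
  have "card (edges E) \<le> (\<Sum>y\<in>V. card (later_neighbours E f y))"
    using card_edges_le_sum_later_neighbours[OF assms(3) bij_betw_imp_inj_on[OF bij]] .
  also have "\<dots> \<le> (\<Sum>y\<in>V. min k (n - 1 - f y))"
    using card_later_neighbours_le_min[OF assms(3,6) bij D_mono] assms(5) by (intro sum_mono) simp
  also have "\<dots> = (\<Sum>i<n. min k (n - Suc i))"
    using sum.reindex_bij_betw[OF bij, of "\<lambda>i. min k (n - 1 - i)"] by (simp add: atLeast0LessThan)
  also have "\<dots> = (\<Sum>i<n. min k i)"
    by (rule sum.nat_diff_reindex)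
  also have "\<dots> = k * n - (k + 1 choose 2)"
    using sum_lessThan_min[OF assms(2)] .
  finally show ?thesis .
qed

end
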